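(* Let $X$ be a $\delta$-hyperbolic metric space. Then $\mathrm{E}(X)$ is $\delta$-hyperbolic as well. If, in addition, $X$ is geodesic, then every point of $\mathrm{E}(X)$ is within distance $\delta$ of $\mathrm{e}(X)$; if $X$ is discretely geodesic, then every point of $\mathrm{E}(X)$ is within distance $\delta+\frac12$ of $\mathrm{e}(X)$.
   Context: $X$ is $\delta$-hyperbolic ($\delta\ge0$) if $d(w,x)+d(y,z)\le\max\{d(w,y)+d(x,z),\,d(x,y)+d(w,z)\}+\delta$ for all $w,x,y,z\in X$. For a metric space $(X,d)$ let $\Delta(X)=\{f\colon X\to\mathbb{R}: f(x)+f(y)\ge d(x,y)\ \forall x,y\}$ with the pointwise order, $\mathrm{E}(X)$ the set of its minimal elements, metrized by $\|f-g\|_\infty=\sup_x|f(x)-g(x)|$, and $\mathrm{e}\colon X\to\mathrm{E}(X)$, $\mathrm{e}(y)=d(\cdot,y)$ (an isometric embedding). $X$ is discretely geodesic if $d$ is integer valued and any $x,y$ are joined by an isometric embedding $\gamma\colon\{0,\dots,d(x,y)\}\to X$ with $\gamma(0)=x,\gamma(d(x,y))=y$. *)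

theory Defs
  imports Complex_Main
begin

definition hyperbolic_on :: "'b set \<Rightarrow> ('b \<Rightarrow> 'b \<Rightarrow> real) \<Rightarrow> real \<Rightarrow> bool" where
  "hyperbolic_on S d \<delta> \<longleftrightarrow> (\<forall>w\<in>S. \<forall>x\<in>S. \<forall>y\<in>S. \<forall>z\<in>S.
     d w x + d y z \<le> max (d w y + d x z) (d x y + d w z) + \<delta>)"

definition Delta :: "('a::metric_space \<Rightarrow> real) set" where
  "Delta = {f. \<forall>x y. dist x y \<le> f x + f y}"

definition Ehull :: "('a::metric_space \<Rightarrow> real) set" where
  "Ehull = {f \<in> Delta. \<forall>g \<in> Delta. g \<le> f \<longrightarrow> g = f}"

definition supdist :: "('a \<Rightarrow> real) \<Rightarrow> ('a \<Rightarrow> real) \<Rightarrow> real" where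
  "supdist f g = (SUP x. \<bar>f x - g x\<bar>)"

definition ekur :: "'a::metric_space \<Rightarrow> ('a \<Rightarrow> real)" where
  "ekur y = (\<lambda>x. dist x y)"

definition geodesic_space :: "'a::metric_space itself \<Rightarrow> bool" where
  "geodesic_space _ \<longleftrightarrow> (\<forall>x y::'a. \<exists>\<gamma>::real \<Rightarrow> 'a. \<gamma> 0 = x \<and> \<gamma> (dist x y) = y \<and>
     (\<forall>s\<in>{0..dist x y}. \<forall>t\<in>{0..dist x y}. dist (\<gamma> s) (\<gamma> t) = \<bar>s - t\<bar>))"

definition discretely_geodesic :: "'a::metric_space itself \<Rightarrow> bool" where
  "discretely_geodesic _ \<longleftrightarrow> (\<forall>x y::'a. dist x y \<in> \<int>) \<and>
     (\<forall>x y::'a. \<exists>n::nat. dist x y = real n \<and> (\<exists>\<gamma>::nat \<Rightarrow> 'a. \<gamma> 0 = x \<and> \<gamma> n = y \<and>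
       (\<forall>i\<le>n. \<forall>j\<le>n. dist (\<gamma> i) (\<gamma> j) = \<bar>real i - real j\<bar>)))"

end

theory Submission
  imports Defs
begin

text \<open>Minimality makes every \<open>f \<in> Ehull\<close> satisfy \<open>f x = (SUP y. dist x y - f y)\<close>, and consequently
  \<open>supdist f g = (SUP a b. dist a b - f a - g b)\<close>. Under this formula the four-point condition
  for two such suprema follows term by term from the one in \<open>X\<close>, so \<open>Ehull\<close> is
  \<open>\<delta>\<close>-hyperbolic. For the distance to \<open>ekur ` X\<close> note \<open>supdist f (ekur v) = f v\<close>. Choose \<open>x, y\<close>
  with \<open>f x + f y\<close> almost equal to \<open>dist x y\<close>; the four-point condition bounds \<open>f v\<close> by
  \<open>\<delta> + \<bar>dist v x - s\<bar>\<close> (up to the error) for any \<open>v\<close> between \<open>x\<close> and \<open>y\<close>, where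
  \<open>s = (dist x y + f x - f y) / 2\<close>. A geodesic contains \<open>v\<close> with \<open>dist v x = s\<close>, a discrete
  geodesic one with \<open>\<bar>dist v x - s\<bar> \<le> 1/2\<close>.\<close>

lemma Delta_nonneg: "f \<in> Delta \<Longrightarrow> 0 \<le> f x"
  unfolding Delta_def by (smt (verit) dist_self mem_Collect_eq)

lemma Ehull_imp_Delta: "f \<in> Ehull \<Longrightarrow> f \<in> Delta"
  unfolding Ehull_def by blast

lemma Ehull_dist_le: "f \<in> Ehull \<Longrightarrow> dist x y \<le> f x + f y"
  using Ehull_imp_Delta unfolding Delta_def by blast

lemma Ehull_nonneg: "f \<in> Ehull \<Longrightarrow> 0 \<le> f x"
  using Delta_nonneg Ehull_imp_Delta by blast

lemma Ehull_almost_tight: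
  fixes f :: "'a::metric_space \<Rightarrow> real"
  assumes f: "f \<in> Ehull" and e: "0 < e"
  shows "\<exists>y. f x + f y < dist x y + e"
proof (rule ccontr)
  assume "\<not> ?thesis"
  hence slack: "\<And>y. dist x y \<le> f x + f y - e" by (smt (verit))
  define g where "g = f(x := f x - e / 2)"
  have "g \<in> Delta"
    unfolding Delta_def
  proof (intro CollectI allI)
    fix a b
    show "dist a b \<le> g a + g b"
      using slack[of a] slack[of b] slack[of x] Ehull_dist_le[OF f, of a b] e
      by (cases "a = x"; cases "b = x") (auto simp: g_def dist_commute)
  qed
  moreover have "g \<le> f" using e by (simp add: g_def le_fun_def)
  ultimately have "g = f" using f unfolding Ehull_def by blast
  hence "g x = f x" by simp
  thus False using e by (simp add: g_def)
qed

lemma Ehull_le_if_dist_diff_le: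
  fixes f :: "'a::metric_space \<Rightarrow> real"
  assumes f: "f \<in> Ehull" and bound: "\<And>y. dist x y - f y \<le> C"
  shows "f x \<le> C"
proof (rule field_le_epsilon)
  fix e :: real assume "0 < e"
  then obtain y where "f x + f y < dist x y + e" using Ehull_almost_tight[OF f] by blast
  thus "f x \<le> C + e" using bound[of y] by simp
qed

lemma Ehull_lipschitz:
  fixes f :: "'a::metric_space \<Rightarrow> real"
  assumes f: "f \<in> Ehull"
  shows "f x \<le> f z + dist x z"
proof (rule Ehull_le_if_dist_diff_le[OF f])
  fix y
  show "dist x y - f y \<le> f z + dist x z"
    using dist_triangle[of x y z] Ehull_dist_le[OF f, of z y] by simp
qed

lemma Ehull_abs_diff_le:
  fixes f g :: "'a::metric_space \<Rightarrow> real"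
  assumes f: "f \<in> Ehull" and g: "g \<in> Ehull"
    and bound: "\<And>a b. dist a b - f a - g b \<le> C"
  shows "\<bar>f x - g x\<bar> \<le> C"
proof -
  have "f x \<le> C + g x"
    by (rule Ehull_le_if_dist_diff_le[OF f]) (use bound in \<open>smt (verit) dist_commute\<close>)
  moreover have "g x \<le> C + f x"
    by (rule Ehull_le_if_dist_diff_le[OF g]) (use bound in \<open>smt (verit) dist_commute\<close>)
  ultimately show ?thesis by simp
qed

lemma bdd_above_Ehull_abs_diff:
  fixes f g :: "'a::metric_space \<Rightarrow> real"
  assumes f: "f \<in> Ehull" and g: "g \<in> Ehull"
  shows "bdd_above (range (\<lambda>x. \<bar>f x - g x\<bar>))"
proof -
  fix z
  have "dist a b - f a - g b \<le> f z + g z" for a b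
    using dist_triangle[of a b z] Ehull_dist_le[OF f, of a z] Ehull_dist_le[OF g, of z b] by simp
  thus ?thesis using Ehull_abs_diff_le[OF f g] by (intro bdd_aboveI2) blast
qed

lemma dist_diff_le_supdist:
  fixes f g :: "'a::metric_space \<Rightarrow> real"
  assumes f: "f \<in> Ehull" and g: "g \<in> Ehull"
  shows "dist a b - f a - g b \<le> supdist f g"
proof -
  have "dist a b - f a - g b \<le> \<bar>f b - g b\<bar>" using Ehull_dist_le[OF f, of a b] by simp
  also have "\<dots> \<le> supdist f g" unfolding supdist_def
    by (rule cSUP_upper[OF _ bdd_above_Ehull_abs_diff[OF f g]]) simp
  finally show ?thesis .
qed

lemma supdist_le_if_dist_diff_le:
  fixes f g :: "'a::metric_space \<Rightarrow> real"
  assumes f: "f \<in> Ehull" and g: "g \<in> Ehull"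
    and bound: "\<And>a b. dist a b - f a - g b \<le> C"
  shows "supdist f g \<le> C"
  unfolding supdist_def by (rule cSUP_least) (use Ehull_abs_diff_le[OF f g bound] in auto)

lemma supdist_ekur:
  fixes f :: "'a::metric_space \<Rightarrow> real"
  assumes f: "f \<in> Ehull"
  shows "supdist f (ekur y) = f y"
proof -
  have bound: "\<bar>f x - dist x y\<bar> \<le> f y" for x
    using Ehull_dist_le[OF f, of x y] Ehull_lipschitz[OF f, of x y] by simp
  have "supdist f (ekur y) \<le> f y" unfolding supdist_def ekur_def
    by (rule cSUP_least) (use bound in auto)
  moreover have "f y \<le> supdist f (ekur y)"
  proof -
    have "f y = \<bar>f y - dist y y\<bar>" using Ehull_nonneg[OF f] by simp
    also have "\<dots> \<le> supdist f (ekur y)" unfolding supdist_def ekur_def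
      by (rule cSUP_upper) (use bound in \<open>auto intro!: bdd_aboveI2\<close>)
    finally show ?thesis .
  qed
  ultimately show ?thesis by simp
qed

lemma INF_supdist_ekur_le:
  fixes f :: "'a::metric_space \<Rightarrow> real"
  assumes f: "f \<in> Ehull" and small: "\<And>e. 0 < e \<Longrightarrow> \<exists>v. f v \<le> c + e"
  shows "(INF y. supdist f (ekur y)) \<le> c"
proof (rule field_le_epsilon)
  fix e :: real assume "0 < e"
  then obtain v where v: "f v \<le> c + e" using small by blast
  have "(INF y. supdist f (ekur y)) \<le> supdist f (ekur v)"
    by (rule cINF_lower) (use supdist_ekur[OF f] Ehull_nonneg[OF f] in \<open>auto intro!: bdd_belowI2\<close>)
  thus "(INF y. supdist f (ekur y)) \<le> c + e" using v supdist_ekur[OF f] by simp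
qed

lemma hyperbolic_on_Ehull:
  assumes hyp: "hyperbolic_on (UNIV::'a::metric_space set) dist \<delta>"
  shows "hyperbolic_on (Ehull :: ('a \<Rightarrow> real) set) supdist \<delta>"
  unfolding hyperbolic_on_def
proof (intro ballI)
  fix w x y z :: "'a \<Rightarrow> real"
  assume w: "w \<in> Ehull" and x: "x \<in> Ehull" and y: "y \<in> Ehull" and z: "z \<in> Ehull"
  define M where "M = max (supdist w y + supdist x z) (supdist x y + supdist w z) + \<delta>"
  have four_point: "(dist a b - w a - x b) + (dist c d - y c - z d) \<le> M" for a b c d
  proof -
    have "dist a b + dist c d \<le> max (dist a c + dist b d) (dist b c + dist a d) + \<delta>"
      using hyp unfolding hyperbolic_on_def by blast
    thus ?thesis
      using dist_diff_le_supdist[OF w y, of a c] dist_diff_le_supdist[OF x z, of b d]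
        dist_diff_le_supdist[OF x y, of b c] dist_diff_le_supdist[OF w z, of a d]
      unfolding M_def by linarith
  qed
  have "supdist y z \<le> M - supdist w x"
  proof (rule supdist_le_if_dist_diff_le[OF y z])
    fix c d
    have "supdist w x \<le> M - (dist c d - y c - z d)"
      by (rule supdist_le_if_dist_diff_le[OF w x]) (use four_point in \<open>smt (verit)\<close>)
    thus "dist c d - y c - z d \<le> M - supdist w x" by simp
  qed
  thus "supdist w x + supdist y z \<le> M" by simp
qed

lemma Ehull_le_four_point:
  fixes f :: "'a::metric_space \<Rightarrow> real"
  assumes f: "f \<in> Ehull" and hyp: "hyperbolic_on (UNIV::'a set) dist \<delta>"
  shows "f v \<le> max (dist v x + f y) (dist v y + f x) - dist x y + \<delta>"
proof (rule Ehull_le_if_dist_diff_le[OF f])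
  fix z
  have "dist v z + dist x y \<le> max (dist v x + dist z y) (dist z x + dist v y) + \<delta>"
    using hyp unfolding hyperbolic_on_def by (metis UNIV_I dist_commute)
  thus "dist v z - f z \<le> max (dist v x + f y) (dist v y + f x) - dist x y + \<delta>"
    using Ehull_dist_le[OF f, of z y] Ehull_dist_le[OF f, of z x] by (smt (verit))
qed

lemma Ehull_le_between:
  fixes f :: "'a::metric_space \<Rightarrow> real"
  assumes f: "f \<in> Ehull" and hyp: "hyperbolic_on (UNIV::'a set) dist \<delta>"
    and tight: "f x + f y < dist x y + e"
    and between: "dist v x + dist v y = dist x y"
    and close: "\<bar>dist v x - (dist x y + f x - f y) / 2\<bar> \<le> r"
  shows "f v \<le> \<delta> + r + e"
proof -
  have "f v \<le> max (dist v x + f y) (dist v y + f x) - dist x y + \<delta>"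
    by (rule Ehull_le_four_point[OF f hyp])
  also have "\<dots> = \<bar>dist v x - (dist x y + f x - f y) / 2\<bar> + (f x + f y - dist x y) / 2 + \<delta>"
    using between by (simp add: max_def abs_if field_simps; linarith?)
  also have "\<dots> \<le> \<delta> + r + e"
    using close tight Ehull_dist_le[OF f, of x y] by argo
  finally show ?thesis .
qed

lemma Ehull_midpoint_parameter_bounds:
  fixes f :: "'a::metric_space \<Rightarrow> real"
  assumes "f \<in> Ehull"
  shows "0 \<le> (dist x y + f x - f y) / 2" and "(dist x y + f x - f y) / 2 \<le> dist x y"
  using Ehull_lipschitz[OF assms, of x y] Ehull_lipschitz[OF assms, of y x]
  by (auto simp: dist_commute)

lemma geodesic_Ehull_small_value:
  fixes f :: "'a::metric_space \<Rightarrow> real"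
  assumes geo: "geodesic_space TYPE('a)" and hyp: "hyperbolic_on (UNIV::'a set) dist \<delta>"
    and f: "f \<in> Ehull" and e: "0 < e"
  shows "\<exists>v. f v \<le> \<delta> + e"
proof -
  fix x :: 'a
  obtain y where tight: "f x + f y < dist x y + e" using Ehull_almost_tight[OF f e] by blast
  obtain \<gamma> :: "real \<Rightarrow> 'a" where \<gamma>0: "\<gamma> 0 = x" and \<gamma>D: "\<gamma> (dist x y) = y"
    and isom: "\<forall>s\<in>{0..dist x y}. \<forall>t\<in>{0..dist x y}. dist (\<gamma> s) (\<gamma> t) = \<bar>s - t\<bar>"
    using geo unfolding geodesic_space_def by blast
  define s where "s = (dist x y + f x - f y) / 2"
  have s: "s \<in> {0..dist x y}" using Ehull_midpoint_parameter_bounds[OF f] by (simp add: s_def)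
  have "dist (\<gamma> s) (\<gamma> (dist x y)) = \<bar>s - dist x y\<bar>" using isom s by simp
  hence "dist (\<gamma> s) y = dist x y - s" using \<gamma>D s by simp
  moreover have "dist (\<gamma> s) x = s" using isom s \<gamma>0 by force
  ultimately have "f (\<gamma> s) \<le> \<delta> + 0 + e"
    by (intro Ehull_le_between[OF f hyp tight]) (simp_all add: s_def)
  thus ?thesis by auto
qed

lemma discretely_geodesic_Ehull_small_value:
  fixes f :: "'a::metric_space \<Rightarrow> real"
  assumes geo: "discretely_geodesic TYPE('a)" and hyp: "hyperbolic_on (UNIV::'a set) dist \<delta>"
    and f: "f \<in> Ehull" and e: "0 < e"
  shows "\<exists>v. f v \<le> \<delta> + 1/2 + e"
proof -
  fix x :: 'a
  obtain y where tight: "f x + f y < dist x y + e" using Ehull_almost_tight[OF f e] by blast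
  obtain n :: nat and \<gamma> :: "nat \<Rightarrow> 'a" where n: "dist x y = real n"
    and \<gamma>0: "\<gamma> 0 = x" and \<gamma>n: "\<gamma> n = y"
    and isom: "\<forall>i\<le>n. \<forall>j\<le>n. dist (\<gamma> i) (\<gamma> j) = \<bar>real i - real j\<bar>"
    using geo unfolding discretely_geodesic_def by blast
  define s where "s = (dist x y + f x - f y) / 2"
  have s: "0 \<le> s" "s \<le> real n"
    unfolding s_def n[symmetric] using Ehull_midpoint_parameter_bounds[OF f, of x y] by simp_all
  define k where "k = nat \<lfloor>s + 1/2\<rfloor>"
  have k: "real k = of_int \<lfloor>s + 1/2\<rfloor>" using s by (simp add: k_def)
  have "\<lfloor>s + 1/2\<rfloor> \<le> \<lfloor>real n + 1/2\<rfloor>" using s by (intro floor_mono) simp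
  hence "k \<le> n" by (simp add: k_def)
  have "\<bar>real k - s\<bar> \<le> 1/2" unfolding k abs_le_iff by linarith
  moreover have "dist (\<gamma> k) x = real k" using isom \<open>k \<le> n\<close> \<gamma>0 by force
  moreover have "dist (\<gamma> k) y = dist x y - real k" using isom \<open>k \<le> n\<close> \<gamma>n n by force
  ultimately have "f (\<gamma> k) \<le> \<delta> + 1/2 + e"
    by (intro Ehull_le_between[OF f hyp tight]) (simp_all add: s_def)
  thus ?thesis by auto
qed

theorem proposition1p3:
  fixes \<delta> :: real
  assumes "\<delta> \<ge> 0"
    and "hyperbolic_on (UNIV::'a::metric_space set) dist \<delta>"
  shows "hyperbolic_on (Ehull :: ('a \<Rightarrow> real) set) supdist \<delta>
    \<and> (geodesic_space TYPE('a) \<longrightarrow>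
           (\<forall>f \<in> (Ehull :: ('a \<Rightarrow> real) set). (INF y. supdist f (ekur y)) \<le> \<delta>))
    \<and> (discretely_geodesic TYPE('a) \<longrightarrow>
           (\<forall>f \<in> (Ehull :: ('a \<Rightarrow> real) set). (INF y. supdist f (ekur y)) \<le> \<delta> + 1/2))"
  using hyperbolic_on_Ehull[OF assms(2)]
    INF_supdist_ekur_le[OF _ geodesic_Ehull_small_value[OF _ assms(2)]]
    INF_supdist_ekur_le[OF _ discretely_geodesic_Ehull_small_value[OF _ assms(2)]]
  by blast

end
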